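(* Fix $\lambda_1,\lambda_2,\lambda_3\in\mathbb{Z}_{\ge0}$ and a $0$-initial triple $(a,b,c)\in\mathbb{R}_+^3$. Let $\mathbf{w}=[w_1,w_2,\dots]$ be an infinite reduced sequence; for $n\ge1$ let $(a_n,b_n,c_n)=\mu_{w_n}\circ\cdots\circ\mu_{w_1}(1,1,1)$ (generalized Markov chain) and $(x_n,y_n,z_n)=\mathcal{M}_{w_n}\circ\cdots\circ\mathcal{M}_{w_1}(a,b,c)$ (classical Euclid chain). (1) If each of $1,2,3$ appears infinitely many times in $\mathbf{w}$, there exists a real number $q$ with $\lim_{n\to\infty}\frac{\log a_n}{x_n}=\lim_{n\to\infty}\frac{\log b_n}{y_n}=\lim_{n\to\infty}\frac{\log c_n}{z_n}=q$. (2) If some index $i\in\{1,2,3\}$ appears only finitely many times in $\mathbf{w}$, there exists a real number $q$ such that for both $j\in\{1,2,3\}\setminus\{i\}$, the logarithm of the $j$-th component of $(a_n,b_n,c_n)$ divided by the $j$-th component of $(x_n,y_n,z_n)$ converges to $q$ as $n\to\infty$.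
   Context: Generalized Markov mutations: $\mu_1(x_1,x_2,x_3)=(\frac{x_2^2+\lambda_1x_2x_3+x_3^2}{x_1},x_2,x_3)$, $\mu_2(x_1,x_2,x_3)=(x_1,\frac{x_1^2+\lambda_2x_1x_3+x_3^2}{x_2},x_3)$, $\mu_3(x_1,x_2,x_3)=(x_1,x_2,\frac{x_1^2+\lambda_3x_1x_2+x_2^2}{x_3})$ (these generate all positive integer solutions of $X_1^2+X_2^2+X_3^2+\lambda_3X_1X_2+\lambda_1X_2X_3+\lambda_2X_3X_1=(3+\lambda_1+\lambda_2+\lambda_3)X_1X_2X_3$ from $(1,1,1)$). Classical Euclid mutations on $\mathbb{R}_+^3$: $\mathcal{M}_1(x,y,z)=(y+z,y,z)$, $\mathcal{M}_2(x,y,z)=(x,x+z,z)$, $\mathcal{M}_3(x,y,z)=(x,y,x+y)$. A $0$-initial triple is $(a,b,c)\in\mathbb{R}_+^3$ with $a\ne b+c$, $b\ne a+c$, $c\ne a+b$. A sequence with entries in $\{1,2,3\}$ is reduced if consecutive entries differ. $\log$ is the natural logarithm. *)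

theory Defs
  imports "HOL-Analysis.Analysis"
begin

type_synonym triple = "real \<times> real \<times> real"

definition comp3 :: "nat \<Rightarrow> triple \<Rightarrow> real" where
  "comp3 j t = (case t of (x1, x2, x3) \<Rightarrow> if j = 1 then x1 else if j = 2 then x2 else x3)"

definition gmut :: "nat \<Rightarrow> nat \<Rightarrow> nat \<Rightarrow> nat \<Rightarrow> triple \<Rightarrow> triple" where
  "gmut l1 l2 l3 k t = (case t of (x1, x2, x3) \<Rightarrow>
     if k = 1 then ((x2^2 + real l1 * x2 * x3 + x3^2) / x1, x2, x3)
     else if k = 2 then (x1, (x1^2 + real l2 * x1 * x3 + x3^2) / x2, x3)
     else (x1, x2, (x1^2 + real l3 * x1 * x2 + x2^2) / x3))"

definition emut :: "nat \<Rightarrow> triple \<Rightarrow> triple" where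
  "emut k t = (case t of (x, y, z) \<Rightarrow>
     if k = 1 then (y + z, y, z)
     else if k = 2 then (x, x + z, z)
     else (x, y, x + y))"

text \<open>Chain: step 0 is the initial triple; step n (n >= 1) is f_{w n} o ... o f_{w 1} applied to it.
  The sequence w is indexed from 1; w 0 is ignored.\<close>
fun chain :: "(nat \<Rightarrow> triple \<Rightarrow> triple) \<Rightarrow> (nat \<Rightarrow> nat) \<Rightarrow> triple \<Rightarrow> nat \<Rightarrow> triple" where
  "chain f w t0 0 = t0"
| "chain f w t0 (Suc n) = f (w (Suc n)) (chain f w t0 n)"

definition reduced_inf_seq :: "(nat \<Rightarrow> nat) \<Rightarrow> bool" where
  "reduced_inf_seq w \<longleftrightarrow> (\<forall>n\<ge>1. w n \<in> {1,2,3} \<and> w (Suc n) \<noteq> w n)"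

definition zero_initial :: "triple \<Rightarrow> bool" where
  "zero_initial t = (case t of (a, b, c) \<Rightarrow>
     a > 0 \<and> b > 0 \<and> c > 0 \<and> a \<noteq> b + c \<and> b \<noteq> a + c \<and> c \<noteq> a + b)"

end

(*
  Taking logarithms turns a generalized Markov mutation into an approximate Euclid mutation:
  along a reduced sequence the mutated entry x' satisfies y z <= x' <= (3 + l1 + l2 + l3) y z,
  so ln x' = ln y + ln z + O(1).  Hence the logarithm of the Markov chain is squeezed between the
  Euclid chain restarted from its value at any time n0 and that chain plus a bounded multiple of
  the Euclid chain restarted from (1, 1, 1).

  If every index recurs, the entries of Euclid chains grow without bound while the largest 2 x 2
  minor of two Euclid chains never increases, so the componentwise ratios of two Euclid chains
  converge to a common limit; restarting at later and later times n0 makes the additive error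
  negligible.

  If an index i stops occurring, the sequence eventually alternates between the other two indices
  and the i-th entries freeze, at C (Markov) and Z (Euclid).  The mutated Euclid entries then grow
  by Z at each step, while the mutated Markov entries satisfy the second order recurrence
  u(k+2) u(k) = u(k+1)^2 + lambda C u(k+1) + C^2 (lambda a mutation coefficient), whose successive
  quotients increase to a finite limit T > 1; by Stolz-Cesaro both ratios tend to ln T / Z.
*)

theory Submission
  imports Defs
begin

section \<open>Limits of real sequences\<close>

lemma common_limit_of_shrinking_windows:
  fixes f :: "nat \<Rightarrow> 'a \<Rightarrow> real"
  assumes "j0 \<in> J"
    and windows: "\<And>\<epsilon>. \<epsilon> > 0 \<Longrightarrow> \<exists>\<alpha>. \<forall>\<^sub>F n in sequentially. \<forall>j\<in>J. \<alpha> \<le> f n j \<and> f n j \<le> \<alpha> + \<epsilon>"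
  shows "\<exists>q. \<forall>j\<in>J. (\<lambda>n. f n j) \<longlonglongrightarrow> q"
proof -
  have close: "\<forall>\<^sub>F n in sequentially. \<forall>m\<ge>n. \<bar>f n j - f m j0\<bar> < \<epsilon>"
    if "\<epsilon> > 0" "j \<in> J" for \<epsilon> j
  proof -
    obtain \<alpha> where "\<forall>\<^sub>F n in sequentially. \<forall>j\<in>J. \<alpha> \<le> f n j \<and> f n j \<le> \<alpha> + \<epsilon> / 2"
      using windows[of "\<epsilon> / 2"] \<open>\<epsilon> > 0\<close> by auto
    then obtain N where N: "\<forall>n\<ge>N. \<forall>j\<in>J. \<alpha> \<le> f n j \<and> f n j \<le> \<alpha> + \<epsilon> / 2"
      unfolding eventually_sequentially by blast
    have "\<bar>f n j - f m j0\<bar> < \<epsilon>" if "N \<le> n" "n \<le> m" for n m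
    proof -
      have "\<alpha> \<le> f n j" "f n j \<le> \<alpha> + \<epsilon> / 2" "\<alpha> \<le> f m j0" "f m j0 \<le> \<alpha> + \<epsilon> / 2"
        using N \<open>j \<in> J\<close> \<open>j0 \<in> J\<close> that by (meson order_trans)+
      then show ?thesis using \<open>\<epsilon> > 0\<close> by linarith
    qed
    then show ?thesis unfolding eventually_sequentially by blast
  qed
  have "Cauchy (\<lambda>n. f n j0)"
  proof (rule metric_CauchyI)
    fix \<epsilon> :: real assume "\<epsilon> > 0"
    then obtain N where "\<forall>n\<ge>N. \<forall>m\<ge>n. \<bar>f n j0 - f m j0\<bar> < \<epsilon>"
      using close[of \<epsilon> j0] \<open>j0 \<in> J\<close> unfolding eventually_sequentially by blast
    then show "\<exists>M. \<forall>m\<ge>M. \<forall>n\<ge>M. dist (f m j0) (f n j0) < \<epsilon>"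
      by (metis dist_commute dist_real_def nle_le order_trans)
  qed
  then obtain q where q: "(\<lambda>n. f n j0) \<longlonglongrightarrow> q"
    using Cauchy_convergent_iff convergent_def by blast
  have "(\<lambda>n. f n j) \<longlonglongrightarrow> q" if "j \<in> J" for j
  proof -
    have "(\<lambda>n. f n j - f n j0) \<longlonglongrightarrow> 0"
    proof (rule tendstoI)
      fix \<epsilon> :: real assume "\<epsilon> > 0"
      from close[OF this that] show "\<forall>\<^sub>F n in sequentially. dist (f n j - f n j0) 0 < \<epsilon>"
        by eventually_elim simp
    qed
    from tendsto_add[OF this q] show ?thesis by simp
  qed
  then show ?thesis by blast
qed

lemma cesaro_mean_zero:
  fixes X :: "nat \<Rightarrow> real"
  assumes "X \<longlonglongrightarrow> 0"
  shows "(\<lambda>n. (\<Sum>i<n. X i) / real n) \<longlonglongrightarrow> 0"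
proof (rule LIMSEQ_I)
  fix r :: real assume r: "0 < r"
  obtain K where K: "\<And>i. K \<le> i \<Longrightarrow> \<bar>X i\<bar> < r / 2"
    using LIMSEQ_D[OF assms, of "r / 2"] r by auto
  define C where "C = \<bar>\<Sum>i<K. X i\<bar>"
  obtain N :: nat where N: "2 * C / r < real N" using reals_Archimedean2 by blast
  have bound: "\<bar>(\<Sum>i<n. X i) / real n\<bar> < r" if n: "max K (Suc N) \<le> n" for n
  proof -
    have split: "(\<Sum>i<n. X i) = (\<Sum>i<K. X i) + (\<Sum>i\<in>{K..<n}. X i)"
      using sum.atLeastLessThan_concat[of 0 K n X] n by (simp add: atLeast0LessThan)
    have "\<bar>\<Sum>i\<in>{K..<n}. X i\<bar> \<le> (\<Sum>i\<in>{K..<n}. r / 2)"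
      using K by (intro order_trans[OF sum_abs] sum_mono) (auto intro: less_imp_le)
    also have "\<dots> \<le> real n * (r / 2)" using r by simp
    finally have tail: "\<bar>\<Sum>i\<in>{K..<n}. X i\<bar> \<le> real n * (r / 2)" .
    have "2 * C / r < real n" using N n by linarith
    then have "C < real n * (r / 2)" using r by (simp add: field_simps)
    then have "\<bar>\<Sum>i<n. X i\<bar> < real n * r" using split tail C_def by linarith
    then show ?thesis using n by (simp add: abs_divide pos_divide_less_eq mult.commute)
  qed
  show "\<exists>no. \<forall>n\<ge>no. norm ((\<Sum>i<n. X i) / real n - 0) < r"
    using bound by (intro exI[of _ "max K (Suc N)"]) auto
qed

lemma stolz_cesaro_linear_denominator:
  fixes A V :: "nat \<Rightarrow> real"
  assumes A: "(\<lambda>n. A (Suc n) - A n) \<longlonglongrightarrow> S" and V: "\<And>n. V (Suc n) = V n + Z" and Z: "0 < Z"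
  shows "(\<lambda>n. A n / V n) \<longlonglongrightarrow> S / Z"
proof -
  define R where "R i = A (Suc i) - A i - S" for i
  have A_sum: "A n = A 0 + (\<Sum>i<n. R i) + real n * S" for n
  proof -
    have "(\<Sum>i<n. R i) = (\<Sum>i<n. A (Suc i) - A i) - real n * S"
      by (simp add: R_def sum_subtractf)
    also have "\<dots> = A n - A 0 - real n * S" by (simp only: sum_lessThan_telescope)
    finally show ?thesis by simp
  qed
  have V_sum: "V n = V 0 + real n * Z" for n
    by (induction n) (simp_all add: V algebra_simps)
  have "R \<longlonglongrightarrow> 0" unfolding R_def using tendsto_diff[OF A tendsto_const[of S]] by simp
  then have num: "(\<lambda>n. A 0 / real n + (\<Sum>i<n. R i) / real n + S) \<longlonglongrightarrow> 0 + 0 + S"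
    by (intro tendsto_add lim_const_over_n cesaro_mean_zero tendsto_const)
  have den: "(\<lambda>n. V 0 / real n + Z) \<longlonglongrightarrow> 0 + Z"
    by (intro tendsto_add lim_const_over_n tendsto_const)
  have lim: "(\<lambda>n. (A 0 / real n + (\<Sum>i<n. R i) / real n + S) / (V 0 / real n + Z)) \<longlonglongrightarrow> S / Z"
    using tendsto_divide[OF num den] Z by simp
  have "\<forall>\<^sub>F n in sequentially.
      (A 0 / real n + (\<Sum>i<n. R i) / real n + S) / (V 0 / real n + Z) = A n / V n"
    using eventually_gt_at_top[of 0]
  proof eventually_elim
    case (elim n)
    have "A 0 / real n + (\<Sum>i<n. R i) / real n + S = A n / real n"
      using elim unfolding A_sum[of n] by (simp add: add_divide_distrib)
    moreover have "V 0 / real n + Z = V n / real n"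
      using elim unfolding V_sum[of n] by (simp add: add_divide_distrib)
    ultimately show ?case using elim by simp
  qed
  with lim show ?thesis by (rule Lim_transform_eventually)
qed

lemma markov_recurrence_ratio_increment:
  fixes u :: "nat \<Rightarrow> real"
  assumes C: "0 < C" and u1: "\<And>n. 1 \<le> u n" and coef: "0 \<le> c" "c \<le> K"
    and rec: "u (Suc (Suc n)) * u n = (u (Suc n))\<^sup>2 + c * C * u (Suc n) + C\<^sup>2"
  shows "u (Suc n) / u n \<le> u (Suc (Suc n)) / u (Suc n)"
    and "u (Suc (Suc n)) / u (Suc n) \<le> u (Suc n) / u n + (K * C + C\<^sup>2) / u n"
proof -
  have pos: "0 < u n" "0 < u (Suc n)" using u1[of n] u1[of "Suc n"] by linarith+
  have step: "u (Suc (Suc n)) / u (Suc n) = u (Suc n) / u n + c * C / u n + C\<^sup>2 / (u n * u (Suc n))"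
  proof -
    have "u (Suc (Suc n)) / u (Suc n) = (u (Suc (Suc n)) * u n) / (u n * u (Suc n))"
      using pos by simp
    also have "\<dots> = u (Suc n) / u n + c * C / u n + C\<^sup>2 / (u n * u (Suc n))"
      unfolding rec using pos by (simp add: field_simps power2_eq_square)
    finally show ?thesis .
  qed
  then show "u (Suc n) / u n \<le> u (Suc (Suc n)) / u (Suc n)" using coef C pos by simp
  have "c * C / u n \<le> K * C / u n" using coef C pos by (simp add: divide_right_mono)
  moreover have "C\<^sup>2 / (u n * u (Suc n)) \<le> C\<^sup>2 / u n"
    using u1[of "Suc n"] pos by (simp add: divide_left_mono)
  ultimately show "u (Suc (Suc n)) / u (Suc n) \<le> u (Suc n) / u n + (K * C + C\<^sup>2) / u n"
    using step by (simp add: add_divide_distrib)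
qed

text \<open>Since \<open>u\<close>
  grows geometrically with ratio \<open>\<rho> = t 0 > 1\<close>, the potential \<open>t n + D \<rho> / ((\<rho> - 1) u n)\<close>
  decreases, which bounds \<open>t\<close>.\<close>

lemma ratio_converges_of_markov_recurrence:
  fixes u coef :: "nat \<Rightarrow> real"
  assumes C: "0 < C" and u1: "\<And>n. 1 \<le> u n" and grow: "\<And>n. u n + C \<le> u (Suc n)"
    and coef: "\<And>n. 0 \<le> coef n" "\<And>n. coef n \<le> K"
    and rec: "\<And>n. u (Suc (Suc n)) * u n = (u (Suc n))\<^sup>2 + coef n * C * u (Suc n) + C\<^sup>2"
  shows "\<exists>T. 1 < T \<and> (\<lambda>n. u (Suc n) / u n) \<longlonglongrightarrow> T"
proof -
  define t where "t n = u (Suc n) / u n" for n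
  define D where "D = K * C + C\<^sup>2"
  have t_mono: "t n \<le> t (Suc n)" and t_incr: "t (Suc n) \<le> t n + D / u n" for n
    using markov_recurrence_ratio_increment[where u = u,
        OF C u1 coef(1)[of n] coef(2)[of n] rec[of n]]
    by (simp_all add: t_def D_def)
  have u_pos: "0 < u n" for n using u1[of n] by linarith
  define \<rho> where "\<rho> = t 0"
  have \<rho>: "1 < \<rho>" using grow[of 0] C u_pos[of 0] by (simp add: \<rho>_def t_def)
  have "incseq t" by (rule incseq_SucI) (rule t_mono)
  then have t_ge: "\<rho> \<le> t n" for n by (simp add: \<rho>_def incseq_def)
  have u_geom: "\<rho> * u n \<le> u (Suc n)" for n
    using t_ge[of n] u_pos[of n] by (simp add: t_def pos_le_divide_eq)
  have "0 \<le> D" using coef[of 0] C by (simp add: D_def)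
  define c where "c = D * \<rho> / (\<rho> - 1)"
  have c: "0 \<le> c" using \<open>0 \<le> D\<close> \<rho> by (simp add: c_def)
  define \<Phi> where "\<Phi> n = t n + c / u n" for n
  have "\<Phi> (Suc n) \<le> \<Phi> n" for n
  proof -
    have "c / u (Suc n) \<le> c / (\<rho> * u n)"
      using u_geom[of n] u_pos[of n] u_pos[of "Suc n"] \<rho> c by (intro divide_left_mono) auto
    moreover have "D / u n + c / (\<rho> * u n) = c / u n"
      using \<rho> u_pos[of n] by (simp add: c_def field_simps)
    ultimately show ?thesis using t_incr[of n] by (simp add: \<Phi>_def)
  qed
  then have "decseq \<Phi>" by (rule decseq_SucI)
  have "\<forall>n. t n \<le> \<Phi> 0"
  proof
    fix n
    have "0 \<le> c / u n" using c u_pos[of n] by simp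
    moreover have "\<Phi> n \<le> \<Phi> 0" using \<open>decseq \<Phi>\<close> by (simp add: decseq_def)
    ultimately show "t n \<le> \<Phi> 0" by (simp add: \<Phi>_def)
  qed
  then obtain T where "t \<longlonglongrightarrow> T" "\<forall>n. t n \<le> T"
    by (rule incseq_convergent[OF \<open>incseq t\<close>])
  moreover have "1 < T" using spec[OF \<open>\<forall>n. t n \<le> T\<close>, of 0] \<rho> by (simp add: \<rho>_def)
  ultimately show ?thesis unfolding t_def by blast
qed

lemma ratio_window_of_sandwich:
  fixes e l p s q \<delta> R :: real
  assumes "0 < e" "l \<le> p" "p \<le> (1 + s) * l" "0 \<le> s" "p / e \<le> R" "\<bar>l / e - q\<bar> < \<delta>"
  shows "q - \<delta> \<le> p / e \<and> p / e \<le> q + \<delta> + s * R"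
proof -
  have "l / e \<le> p / e" using assms(1,2) by (simp add: divide_right_mono)
  moreover have "p / e \<le> l / e + s * (l / e)"
    using divide_right_mono[OF assms(3), of e] assms(1)
    by (simp add: distrib_right add_divide_distrib)
  moreover have "s * (l / e) \<le> s * R"
    using \<open>l / e \<le> p / e\<close> assms(4,5) by (intro mult_left_mono) auto
  ultimately show ?thesis using assms(6) by auto
qed

section \<open>Euclid chains\<close>

definition other1 :: "nat \<Rightarrow> nat" where
  "other1 k = (if k = 1 then 2 else 1)"

definition other2 :: "nat \<Rightarrow> nat" where
  "other2 k = (if k = 3 then 2 else 3)"

lemma other_indices:
  assumes "k \<in> {1,2,3}"
  shows "other1 k \<in> {1,2,3}" "other2 k \<in> {1,2,3}"
    and "other1 k \<noteq> k" "other2 k \<noteq> k" "other1 k \<noteq> other2 k"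
  using assms by (auto simp: other1_def other2_def)

lemma index_eq_or_other:
  "k \<in> {1,2,3} \<Longrightarrow> j \<in> {1,2,3} \<Longrightarrow> j = k \<or> j = other1 k \<or> j = other2 k"
  by (auto simp: other1_def other2_def)

lemma others_eq_of_distinct:
  assumes "k \<in> {1,2,3}" "p \<in> {1,2,3}" "i \<in> {1,2,3}" "p \<noteq> k" "i \<noteq> k" "p \<noteq> i"
  shows "other1 k = p \<and> other2 k = i \<or> other1 k = i \<and> other2 k = p"
  using assms by (auto simp: other1_def other2_def)

lemma comp3_simps [simp]:
  "comp3 1 (x, y, z) = x" "comp3 (Suc 0) (x, y, z) = x"
  "comp3 2 (x, y, z) = y" "comp3 3 (x, y, z) = z"
  by (simp_all add: comp3_def)

lemma comp3_const [simp]: "comp3 j (c, c, c) = c"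
  by (simp add: comp3_def)

lemma comp3_add [simp]: "comp3 j (s + t) = comp3 j s + comp3 j t"
  by (cases s; cases t) (simp add: comp3_def)

lemma comp3_scaleR [simp]: "comp3 j (r *\<^sub>R t) = r * comp3 j t"
  by (cases t) (simp add: comp3_def)

lemma triple_le_iff: "s \<le> t \<longleftrightarrow> (\<forall>j\<in>{1,2,3}. comp3 j s \<le> comp3 j t)"
  by (cases s; cases t) auto

lemma triple_leD: "s \<le> t \<Longrightarrow> j \<in> {1,2,3} \<Longrightarrow> comp3 j s \<le> comp3 j t"
  unfolding triple_le_iff by blast

definition positive_triple :: "triple \<Rightarrow> bool" where
  "positive_triple t \<longleftrightarrow> (\<forall>j\<in>{1,2,3}. 0 < comp3 j t)"

lemma positive_triple_Pair [simp]: "positive_triple (x, y, z) \<longleftrightarrow> 0 < x \<and> 0 < y \<and> 0 < z"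
  by (simp add: positive_triple_def)

lemma positive_tripleD: "positive_triple t \<Longrightarrow> j \<in> {1,2,3} \<Longrightarrow> 0 < comp3 j t"
  unfolding positive_triple_def by blast

lemma positive_triple_ge_const:
  assumes "positive_triple t"
  obtains m where "0 < m" and "(m, m, m) \<le> t"
proof -
  obtain x y z where t: "t = (x, y, z)" by (cases t)
  show ?thesis using assms that[of "min x (min y z)"] by (simp add: t min_le_iff_disj)
qed

lemma scaleR_le_iff_ratios:
  assumes "positive_triple t"
  shows "r *\<^sub>R t \<le> s \<longleftrightarrow> (\<forall>j\<in>{1,2,3}. r \<le> comp3 j s / comp3 j t)"
    and "s \<le> r *\<^sub>R t \<longleftrightarrow> (\<forall>j\<in>{1,2,3}. comp3 j s / comp3 j t \<le> r)"
  unfolding triple_le_iff using assms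
  by (auto simp: positive_triple_def pos_le_divide_eq pos_divide_le_eq)

lemma scaleR_triple_mono: "0 \<le> r \<Longrightarrow> s \<le> t \<Longrightarrow> r *\<^sub>R s \<le> r *\<^sub>R (t :: triple)"
  by (auto simp: triple_le_iff mult_left_mono)

lemma comp3_emut:
  assumes "k \<in> {1,2,3}" "j \<in> {1,2,3}"
  shows "comp3 j (emut k t) =
    (if j = k then comp3 (other1 k) t + comp3 (other2 k) t else comp3 j t)"
  using assms by (cases t) (auto simp: emut_def other1_def other2_def)

lemma emut_add: "emut k (s + t) = emut k s + emut k t"
  by (cases s; cases t) (simp add: emut_def)

lemma emut_scaleR: "emut k (r *\<^sub>R t) = r *\<^sub>R emut k t"
  by (cases t) (simp add: emut_def algebra_simps)

lemma emut_mono: "s \<le> t \<Longrightarrow> emut k s \<le> emut k t"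
  by (cases s; cases t) (auto simp: emut_def add_mono)

lemma chain_add: "chain f w t (m + n) = chain f (\<lambda>i. w (m + i)) (chain f w t m) n"
  by (induction n) simp_all

lemma INFM_shift: "(\<exists>\<^sub>\<infinity>n::nat. P n) \<Longrightarrow> (\<exists>\<^sub>\<infinity>i. P (k + i))"
  unfolding cofinite_eq_sequentially frequently_def
  using eventually_sequentially_seg[of "\<lambda>n. \<not> P n" k] by (simp add: add.commute)

lemma chain_emut_add: "chain emut w (s + t) n = chain emut w s n + chain emut w t n"
  by (induction n) (simp_all add: emut_add)

lemma chain_emut_scaleR: "chain emut w (r *\<^sub>R t) n = r *\<^sub>R chain emut w t n"
  by (induction n) (simp_all add: emut_scaleR)

lemma chain_emut_mono: "s \<le> t \<Longrightarrow> chain emut w s n \<le> chain emut w t n"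
  by (induction n) (simp_all add: emut_mono)

lemma chain_emut_between:
  assumes "lo *\<^sub>R V \<le> U" "U \<le> hi *\<^sub>R V"
  shows "lo *\<^sub>R chain emut w V n \<le> chain emut w U n"
    and "chain emut w U n \<le> hi *\<^sub>R chain emut w V n"
  using chain_emut_mono[OF assms(1)] chain_emut_mono[OF assms(2)]
  by (simp_all add: chain_emut_scaleR)

lemma chain_emut_unchanged:
  "w (Suc n) \<in> {1,2,3} \<Longrightarrow> j \<in> {1,2,3} \<Longrightarrow> j \<noteq> w (Suc n) \<Longrightarrow>
    comp3 j (chain emut w t (Suc n)) = comp3 j (chain emut w t n)"
  by (simp add: comp3_emut)

lemma chain_emut_ge_subsolution:
  assumes "\<And>n. X (Suc n) \<le> emut (w (Suc n)) (X n)"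
  shows "X n \<le> chain emut w (X 0) n"
proof (induction n)
  case (Suc n)
  have "X (Suc n) \<le> emut (w (Suc n)) (X n)" by (fact assms)
  also have "\<dots> \<le> emut (w (Suc n)) (chain emut w (X 0) n)" using Suc.IH by (rule emut_mono)
  finally show ?case by simp
qed simp

lemma chain_emut_le_supersolution:
  assumes "\<And>n. emut (w (Suc n)) (X n) \<le> X (Suc n)"
  shows "chain emut w (X 0) n \<le> X n"
proof (induction n)
  case (Suc n)
  have "chain emut w (X 0) (Suc n) \<le> emut (w (Suc n)) (X n)" using Suc.IH by (simp add: emut_mono)
  also have "\<dots> \<le> X (Suc n)" by (fact assms)
  finally show ?case .
qed simp

lemma emut_ge_const: "0 \<le> m \<Longrightarrow> (m, m, m) \<le> t \<Longrightarrow> (m, m, m) \<le> emut k t"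
  by (cases t) (auto simp: emut_def)

lemma chain_emut_ge_const:
  assumes "0 \<le> m" "(m, m, m) \<le> chain emut w t n0" "n0 \<le> n"
  shows "(m, m, m) \<le> chain emut w t n"
  using assms(3)
proof (induction n rule: dec_induct)
  case (step n)
  then show ?case using emut_ge_const[OF assms(1)] by simp
qed (use assms in simp)

lemma chain_emut_positive:
  assumes "positive_triple t"
  shows "positive_triple (chain emut w t n)"
proof -
  obtain m where m: "0 < m" "(m, m, m) \<le> t" using positive_triple_ge_const[OF assms] .
  then have "(m, m, m) \<le> chain emut w t n" using chain_emut_ge_const[of m w t 0 n] by simp
  with m(1) show ?thesis by (auto simp: positive_triple_def triple_le_iff)
qed

lemma chain_emut_ge_double_after_visit:
  assumes W: "\<forall>n\<ge>1. w n \<in> {1,2,3}" and m: "0 \<le> m" "(m, m, m) \<le> chain emut w t n0"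
    and visit: "n0 < s" "s \<le> n"
  shows "2 * m \<le> comp3 (w s) (chain emut w t n)"
proof -
  have fresh: "2 * m \<le> comp3 (w (Suc i)) (chain emut w t (Suc i))" if "n0 \<le> i" for i
  proof -
    have k: "w (Suc i) \<in> {1,2,3}" using W by simp
    have "(m, m, m) \<le> chain emut w t i" using chain_emut_ge_const[OF m that] .
    then have "m \<le> comp3 (other1 (w (Suc i))) (chain emut w t i)"
      "m \<le> comp3 (other2 (w (Suc i))) (chain emut w t i)"
      using other_indices[OF k] by (auto simp: triple_le_iff)
    then show ?thesis using comp3_emut[OF k k] by simp
  qed
  show ?thesis
    using visit(2)
  proof (induction n rule: dec_induct)
    case base
    obtain i where "s = Suc i" "n0 \<le> i" using visit(1) by (cases s) auto
    then show ?case using fresh[of i] by simp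
  next
    case (step n)
    have k: "w (Suc n) \<in> {1,2,3}" and j: "w s \<in> {1,2,3}" using W visit by auto
    show ?case
    proof (cases "w s = w (Suc n)")
      case True
      then show ?thesis using fresh[of n] step.hyps visit(1) by simp
    next
      case False
      then show ?thesis using step.IH comp3_emut[OF k j] by simp
    qed
  qed
qed

lemma chain_emut_doubles:
  assumes W: "\<forall>n\<ge>1. w n \<in> {1,2,3}" and visits: "\<forall>j\<in>{1,2,3}. \<exists>\<^sub>\<infinity>n. w n = j"
    and c: "0 \<le> c" "(c, c, c) \<le> chain emut w t n"
  obtains n' where "(2 * c, 2 * c, 2 * c) \<le> chain emut w t n'"
proof -
  have "\<forall>j\<in>{1,2,3}. \<exists>s>n. w s = j" using visits by (simp add: INFM_nat)
  then obtain s1 s2 s3 where s: "n < s1" "w s1 = 1" "n < s2" "w s2 = 2" "n < s3" "w s3 = 3"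
    by auto
  define n' where "n' = max s1 (max s2 s3)"
  have "2 * c \<le> comp3 j (chain emut w t n')" if j: "j \<in> {1,2,3}" for j
  proof -
    obtain s where "s \<in> {s1, s2, s3}" "w s = j" using j s by auto
    moreover from this have "n < s" "s \<le> n'" using s unfolding n'_def by auto
    ultimately show ?thesis using chain_emut_ge_double_after_visit[OF W c] by blast
  qed
  then show ?thesis using that[of n'] by (simp add: triple_le_iff)
qed

lemma chain_emut_unbounded:
  assumes W: "\<forall>n\<ge>1. w n \<in> {1,2,3}" and visits: "\<forall>j\<in>{1,2,3}. \<exists>\<^sub>\<infinity>n. w n = j"
    and t: "positive_triple t"
  shows "\<forall>\<^sub>F n in sequentially. (B, B, B) \<le> chain emut w t n"
proof -
  obtain m where m: "0 < m" "(m, m, m) \<le> t" using positive_triple_ge_const[OF t] .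
  have powers: "\<exists>n. (2 ^ i * m, 2 ^ i * m, 2 ^ i * m) \<le> chain emut w t n" for i
  proof (induction i)
    case 0
    show ?case using m by (intro exI[of _ 0]) simp
  next
    case (Suc i)
    then obtain n where n: "(2 ^ i * m, 2 ^ i * m, 2 ^ i * m) \<le> chain emut w t n" ..
    have "0 \<le> 2 ^ i * m" using m by simp
    from chain_emut_doubles[OF W visits this n] obtain n'
      where "(2 * (2 ^ i * m), 2 * (2 ^ i * m), 2 * (2 ^ i * m)) \<le> chain emut w t n'" .
    then show ?case by (intro exI[of _ n']) (simp add: mult.assoc)
  qed
  obtain i where "B / m < 2 ^ i" using real_arch_pow[of 2 "B / m"] by auto
  then have B: "B \<le> 2 ^ i * m" using m by (simp add: field_simps)
  obtain n0 where n0: "(2 ^ i * m, 2 ^ i * m, 2 ^ i * m) \<le> chain emut w t n0"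
    using powers ..
  have "(B, B, B) \<le> chain emut w t n" if "n0 \<le> n" for n
  proof -
    have "(B, B, B) \<le> (2 ^ i * m, 2 ^ i * m, 2 ^ i * m)" using B by simp
    also have "\<dots> \<le> chain emut w t n" using chain_emut_ge_const[OF _ n0 that] m by simp
    finally show ?thesis .
  qed
  then show ?thesis unfolding eventually_sequentially by blast
qed

definition max_minor :: "triple \<Rightarrow> triple \<Rightarrow> real" where
  "max_minor s t = (case (s, t) of ((x1, x2, x3), (y1, y2, y3)) \<Rightarrow>
     max \<bar>x1 * y2 - x2 * y1\<bar> (max \<bar>x1 * y3 - x3 * y1\<bar> \<bar>x2 * y3 - x3 * y2\<bar>))"

lemma abs_minor_le_max_minor:
  "i \<in> {1,2,3} \<Longrightarrow> j \<in> {1,2,3} \<Longrightarrow>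
    \<bar>comp3 i s * comp3 j t - comp3 j s * comp3 i t\<bar> \<le> max_minor s t"
  by (cases s; cases t) (auto simp: max_minor_def abs_minus_commute)

lemma max_minor_emut: "max_minor (emut k s) (emut k t) \<le> max_minor s t"
proof (cases s; cases t)
  fix x1 x2 x3 y1 y2 y3 assume st: "s = (x1, x2, x3)" "t = (y1, y2, y3)"
  have [simp]: "\<bar>(x2 + x3) * y2 - x2 * (y2 + y3)\<bar> = \<bar>x2 * y3 - x3 * y2\<bar>"
    "\<bar>(x2 + x3) * y3 - x3 * (y2 + y3)\<bar> = \<bar>x2 * y3 - x3 * y2\<bar>"
    "\<bar>x1 * (y1 + y3) - (x1 + x3) * y1\<bar> = \<bar>x1 * y3 - x3 * y1\<bar>"
    "\<bar>(x1 + x3) * y3 - x3 * (y1 + y3)\<bar> = \<bar>x1 * y3 - x3 * y1\<bar>"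
    "\<bar>x1 * (y1 + y2) - (x1 + x2) * y1\<bar> = \<bar>x1 * y2 - x2 * y1\<bar>"
    "\<bar>x2 * (y1 + y2) - (x1 + x2) * y2\<bar> = \<bar>x1 * y2 - x2 * y1\<bar>"
    by (simp_all add: algebra_simps abs_minus_commute)
  show ?thesis using st by (simp add: max_minor_def emut_def le_max_iff_disj)
qed

lemma max_minor_chain_emut: "max_minor (chain emut w s n) (chain emut w t n) \<le> max_minor s t"
  by (induction n) (auto intro: order_trans[OF max_minor_emut])

lemma ratio_diff_le_max_minor:
  assumes "i \<in> {1,2,3}" "j \<in> {1,2,3}" "0 < comp3 i t" "0 < comp3 j t"
  shows "\<bar>comp3 i s / comp3 i t - comp3 j s / comp3 j t\<bar> \<le> max_minor s t / (comp3 i t * comp3 j t)"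
proof -
  have "comp3 i s / comp3 i t - comp3 j s / comp3 j t
      = (comp3 i s * comp3 j t - comp3 j s * comp3 i t) / (comp3 i t * comp3 j t)"
    using assms by (simp add: field_simps)
  then show ?thesis
    using abs_minor_le_max_minor[OF assms(1,2), of s t] assms(3,4)
    by (simp add: abs_mult divide_right_mono)
qed

lemma ratio_diff_le_of_large:
  assumes "1 \<le> B" "(B, B, B) \<le> t" "i \<in> {1,2,3}" "j \<in> {1,2,3}"
  shows "\<bar>comp3 i s / comp3 i t - comp3 j s / comp3 j t\<bar> \<le> max_minor s t / B"
proof -
  have ti: "B \<le> comp3 i t" and tj: "B \<le> comp3 j t" using assms by (auto simp: triple_le_iff)
  then have pos: "0 < comp3 i t" "0 < comp3 j t" using assms(1) by linarith+
  have "B * 1 \<le> comp3 i t * comp3 j t" using ti tj assms(1) by (intro mult_mono) auto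
  moreover have "0 \<le> max_minor s t" by (cases s; cases t) (simp add: max_minor_def)
  ultimately have "max_minor s t / (comp3 i t * comp3 j t) \<le> max_minor s t / B"
    using assms(1) pos by (intro divide_left_mono) simp_all
  with ratio_diff_le_max_minor[OF assms(3,4) pos, of s] show ?thesis by linarith
qed

text \<open>Mutations never increase the largest \<open>2 \<times> 2\<close> minor of two chains while all entries grow
  without bound, so the spread of the componentwise ratios becomes arbitrarily small; by the mediant
  property the later ratios stay inside that spread.\<close>

lemma chain_emut_ratios_converge:
  assumes W: "\<forall>n\<ge>1. w n \<in> {1,2,3}" and visits: "\<forall>j\<in>{1,2,3}. \<exists>\<^sub>\<infinity>n. w n = j"
    and V: "positive_triple V"
  shows "\<exists>q. \<forall>j\<in>{1,2,3}. (\<lambda>n. comp3 j (chain emut w U n) / comp3 j (chain emut w V n)) \<longlonglongrightarrow> q"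
proof (rule common_limit_of_shrinking_windows)
  show "1 \<in> {1,2,3::nat}" by simp
next
  fix \<epsilon> :: real assume \<epsilon>: "\<epsilon> > 0"
  let ?U = "chain emut w U" and ?V = "chain emut w V"
  define \<delta> where "\<delta> = \<epsilon> / 2"
  have \<delta>: "0 < \<delta>" using \<epsilon> by (simp add: \<delta>_def)
  define B where "B = max 1 (max_minor U V / \<delta>)"
  have B: "1 \<le> B" "max_minor U V / B \<le> \<delta>"
  proof -
    show B1: "1 \<le> B" by (simp add: B_def)
    have "max_minor U V / \<delta> \<le> B" by (simp add: B_def)
    then have "max_minor U V \<le> B * \<delta>" using \<delta> by (simp add: pos_divide_le_eq)
    then show "max_minor U V / B \<le> \<delta>" using B1 by (simp add: pos_divide_le_eq mult.commute)
  qed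
  have Vpos: "positive_triple (?V n)" for n using chain_emut_positive[OF V] .
  obtain k where k: "(B, B, B) \<le> ?V k"
    using eventually_happens'[OF _ chain_emut_unbounded[OF W visits V, of B]] by auto
  define c where "c = comp3 1 (?U k) / comp3 1 (?V k)"
  have close: "\<forall>j\<in>{1,2,3}. \<bar>comp3 j (?U k) / comp3 j (?V k) - c\<bar> \<le> \<delta>"
  proof
    fix j :: nat assume j: "j \<in> {1,2,3}"
    have "\<bar>comp3 j (?U k) / comp3 j (?V k) - c\<bar> \<le> max_minor (?U k) (?V k) / B"
      unfolding c_def by (rule ratio_diff_le_of_large[OF B(1) k j]) simp
    also have "\<dots> \<le> max_minor U V / B"
      using max_minor_chain_emut[of w U k V] B(1) by (simp add: divide_right_mono)
    finally show "\<bar>comp3 j (?U k) / comp3 j (?V k) - c\<bar> \<le> \<delta>" using B(2) by linarith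
  qed
  have "(c - \<delta>) *\<^sub>R ?V k \<le> ?U k" "?U k \<le> (c + \<delta>) *\<^sub>R ?V k"
    unfolding scaleR_le_iff_ratios[OF Vpos] using close[unfolded abs_le_iff] by auto
  note between = chain_emut_between[OF this, of "\<lambda>i. w (k + i)"]
  have "\<forall>j\<in>{1,2,3}. c - \<delta> \<le> comp3 j (?U n) / comp3 j (?V n)
      \<and> comp3 j (?U n) / comp3 j (?V n) \<le> c - \<delta> + \<epsilon>" if "k \<le> n" for n
  proof -
    obtain d where n: "n = k + d" using \<open>k \<le> n\<close> le_Suc_ex by blast
    show ?thesis
      using between[of d] unfolding n chain_add[symmetric] scaleR_le_iff_ratios[OF Vpos] \<delta>_def
      by auto
  qed
  then show "\<exists>\<alpha>. \<forall>\<^sub>F n in sequentially. \<forall>j\<in>{1,2,3}. \<alpha> \<le> comp3 j (?U n) / comp3 j (?V n)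
      \<and> comp3 j (?U n) / comp3 j (?V n) \<le> \<alpha> + \<epsilon>"
    unfolding eventually_sequentially by blast
qed

lemma chain_emut_restart_ratios_converge:
  assumes W: "\<forall>n\<ge>1. w n \<in> {1,2,3}" and visits: "\<forall>j\<in>{1,2,3}. \<exists>\<^sub>\<infinity>n. w n = j"
    and V: "positive_triple V"
  shows "\<exists>q. \<forall>j\<in>{1,2,3}.
    (\<lambda>d. comp3 j (chain emut (\<lambda>i. w (n0 + i)) U d) / comp3 j (chain emut w V (n0 + d))) \<longlonglongrightarrow> q"
proof -
  have "\<forall>i\<ge>1. w (n0 + i) \<in> {1,2,3}" using W by simp
  moreover have "\<forall>j\<in>{1,2,3}. \<exists>\<^sub>\<infinity>i. w (n0 + i) = j"
    using visits INFM_shift[of "\<lambda>n. w n = _" n0] by blast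
  moreover have "positive_triple (chain emut w V n0)" using chain_emut_positive[OF V] .
  ultimately show ?thesis
    using chain_emut_ratios_converge[where w = "\<lambda>i. w (n0 + i)" and V = "chain emut w V n0" and U = U]
    by (simp add: chain_add)
qed

section \<open>Generalized Markov mutations\<close>

text \<open>The mutated value is the second root of the Markov equation viewed as a quadratic in \<open>x\<close>;
  by Vieta it equals \<open>(3 + \<alpha> + \<beta> + \<gamma>) y z - \<beta> y - \<gamma> z - x\<close>.\<close>

lemma markov_vieta_step:
  fixes x y z \<alpha> \<beta> \<gamma> :: real
  assumes ge1: "1 \<le> x" "1 \<le> y" "1 \<le> z" and coeffs: "0 \<le> \<alpha>" "0 \<le> \<beta>" "0 \<le> \<gamma>"
    and eq: "x\<^sup>2 + y\<^sup>2 + z\<^sup>2 + \<alpha> * y * z + \<beta> * x * y + \<gamma> * x * z = (3 + \<alpha> + \<beta> + \<gamma>) * x * y * z"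
    and not_max: "x \<le> y \<or> x \<le> z"
  defines "x' \<equiv> (y\<^sup>2 + \<alpha> * y * z + z\<^sup>2) / x"
  shows "x'\<^sup>2 + y\<^sup>2 + z\<^sup>2 + \<alpha> * y * z + \<beta> * x' * y + \<gamma> * x' * z = (3 + \<alpha> + \<beta> + \<gamma>) * x' * y * z"
    and "y + z \<le> x'" and "y * z \<le> x'" and "x' \<le> (3 + \<alpha> + \<beta> + \<gamma>) * y * z"
proof -
  have vieta: "x' = (3 + \<alpha> + \<beta> + \<gamma>) * y * z - \<beta> * y - \<gamma> * z - x"
  proof -
    have "y\<^sup>2 + \<alpha> * y * z + z\<^sup>2 = x * ((3 + \<alpha> + \<beta> + \<gamma>) * y * z - \<beta> * y - \<gamma> * z - x)"
      using eq by (simp add: algebra_simps power2_eq_square)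
    then show ?thesis using ge1 unfolding x'_def by (simp add: field_simps)
  qed
  from eq show "x'\<^sup>2 + y\<^sup>2 + z\<^sup>2 + \<alpha> * y * z + \<beta> * x' * y + \<gamma> * x' * z
      = (3 + \<alpha> + \<beta> + \<gamma>) * x' * y * z"
    unfolding vieta by algebra
  have yz: "y \<le> y * z" "z \<le> y * z"
    using ge1 by (simp_all add: mult_le_cancel_left1 mult_le_cancel_right1)
  have "\<beta> * y \<le> \<beta> * (y * z)" "\<gamma> * z \<le> \<gamma> * (y * z)" "0 \<le> \<alpha> * (y * z)"
    using yz coeffs ge1 by (simp_all add: mult_left_mono)
  moreover have "x \<le> y * z" using not_max yz by linarith
  moreover have "x' = \<alpha> * (y * z) + \<beta> * (y * z) + \<gamma> * (y * z) + 3 * (y * z) - \<beta> * y - \<gamma> * z - x"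
    using vieta by (simp add: algebra_simps)
  ultimately show "y + z \<le> x'" "y * z \<le> x'" using yz ge1 by linarith+
  have "0 \<le> \<beta> * y" "0 \<le> \<gamma> * z" using coeffs ge1 by simp_all
  then show "x' \<le> (3 + \<alpha> + \<beta> + \<gamma>) * y * z" using vieta ge1 by linarith
qed

definition markov_eq :: "nat \<Rightarrow> nat \<Rightarrow> nat \<Rightarrow> triple \<Rightarrow> bool" where
  "markov_eq l1 l2 l3 t \<longleftrightarrow> (case t of (x1, x2, x3) \<Rightarrow>
     x1\<^sup>2 + x2\<^sup>2 + x3\<^sup>2 + real l3 * x1 * x2 + real l1 * x2 * x3 + real l2 * x3 * x1
       = (3 + real l1 + real l2 + real l3) * x1 * x2 * x3)"

definition mut_coeff :: "nat \<Rightarrow> nat \<Rightarrow> nat \<Rightarrow> nat \<Rightarrow> real" where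
  "mut_coeff l1 l2 l3 k = real (if k = 1 then l1 else if k = 2 then l2 else l3)"

lemma comp3_gmut_other:
  "k \<in> {1,2,3} \<Longrightarrow> j \<in> {1,2,3} \<Longrightarrow> j \<noteq> k \<Longrightarrow> comp3 j (gmut l1 l2 l3 k t) = comp3 j t"
  by (cases t) (auto simp: gmut_def)

lemma comp3_gmut_self:
  "k \<in> {1,2,3} \<Longrightarrow> comp3 k (gmut l1 l2 l3 k t) =
    ((comp3 (other1 k) t)\<^sup>2 + mut_coeff l1 l2 l3 k * comp3 (other1 k) t * comp3 (other2 k) t
      + (comp3 (other2 k) t)\<^sup>2) / comp3 k t"
  by (cases t) (auto simp: gmut_def other1_def other2_def mut_coeff_def)

lemma markov_eq_rotate:
  assumes "k \<in> {1,2,3}"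
  shows "markov_eq l1 l2 l3 t \<longleftrightarrow>
    (comp3 k t)\<^sup>2 + (comp3 (other1 k) t)\<^sup>2 + (comp3 (other2 k) t)\<^sup>2
      + mut_coeff l1 l2 l3 k * comp3 (other1 k) t * comp3 (other2 k) t
      + mut_coeff l1 l2 l3 (other2 k) * comp3 k t * comp3 (other1 k) t
      + mut_coeff l1 l2 l3 (other1 k) * comp3 k t * comp3 (other2 k) t
    = (3 + mut_coeff l1 l2 l3 k + mut_coeff l1 l2 l3 (other2 k) + mut_coeff l1 l2 l3 (other1 k))
      * comp3 k t * comp3 (other1 k) t * comp3 (other2 k) t"
proof -
  obtain x1 x2 x3 where t: "t = (x1, x2, x3)" by (cases t)
  consider "k = 1" | "k = 2" | "k = 3" using assms by auto
  then show ?thesis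
    by cases (simp_all add: t markov_eq_def mut_coeff_def other1_def other2_def algebra_simps)
qed

lemma gmut_step:
  assumes k: "k \<in> {1,2,3}" and eq: "markov_eq l1 l2 l3 t" and ge1: "(1, 1, 1) \<le> t"
    and not_max: "comp3 k t \<le> comp3 (other1 k) t \<or> comp3 k t \<le> comp3 (other2 k) t"
  defines "y \<equiv> comp3 (other1 k) t" and "z \<equiv> comp3 (other2 k) t"
    and "t' \<equiv> gmut l1 l2 l3 k t"
  shows "markov_eq l1 l2 l3 t'" and "y + z \<le> comp3 k t'" and "y * z \<le> comp3 k t'"
    and "comp3 k t' \<le> (3 + real l1 + real l2 + real l3) * y * z"
proof -
  note others = other_indices[OF k]
  have coeff_sum: "mut_coeff l1 l2 l3 k + mut_coeff l1 l2 l3 (other2 k)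
      + mut_coeff l1 l2 l3 (other1 k) = real l1 + real l2 + real l3"
    using k by (auto simp: mut_coeff_def other1_def other2_def)
  have "1 \<le> comp3 k t" "1 \<le> y" "1 \<le> z"
    using ge1 k others unfolding y_def z_def triple_le_iff by auto
  note step = markov_vieta_step[OF this, of "mut_coeff l1 l2 l3 k" "mut_coeff l1 l2 l3 (other2 k)"
      "mut_coeff l1 l2 l3 (other1 k)"]
  have new: "comp3 k t' = (y\<^sup>2 + mut_coeff l1 l2 l3 k * y * z + z\<^sup>2) / comp3 k t"
    unfolding t'_def y_def z_def using comp3_gmut_self[OF k] by simp
  have old: "comp3 (other1 k) t' = y" "comp3 (other2 k) t' = z"
    unfolding t'_def y_def z_def using comp3_gmut_other[OF k] others by auto
  have nonneg: "0 \<le> mut_coeff l1 l2 l3 i" for i by (simp add: mut_coeff_def)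
  note step' = step[folded new, OF nonneg nonneg nonneg
      eq[unfolded markov_eq_rotate[OF k], folded y_def z_def] not_max[folded y_def z_def]]
  show "markov_eq l1 l2 l3 t'"
    unfolding markov_eq_rotate[OF k] old using step'(1) .
  show "y + z \<le> comp3 k t'" "y * z \<le> comp3 k t'" using step'(2,3) .
  show "comp3 k t' \<le> (3 + real l1 + real l2 + real l3) * y * z"
    using step'(4) coeff_sum by (simp add: add.assoc)
qed

definition ln_triple :: "triple \<Rightarrow> triple" where
  "ln_triple t = (case t of (x, y, z) \<Rightarrow> (ln x, ln y, ln z))"

lemma comp3_ln_triple [simp]: "comp3 j (ln_triple t) = ln (comp3 j t)"
  by (cases t) (simp add: ln_triple_def comp3_def)

context
  fixes l1 l2 l3 :: nat and w :: "nat \<Rightarrow> nat"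
  assumes reduced: "reduced_inf_seq w"
begin

abbreviation markov :: "nat \<Rightarrow> triple" where
  "markov n \<equiv> chain (gmut l1 l2 l3) w (1, 1, 1) n"

abbreviation log_ratio :: "triple \<Rightarrow> nat \<Rightarrow> nat \<Rightarrow> real" where
  "log_ratio t j n \<equiv> ln (comp3 j (markov n)) / comp3 j (chain emut w t n)"

lemma indices_w: "\<forall>n\<ge>1. w n \<in> {1,2,3}"
  using reduced by (simp add: reduced_inf_seq_def)

lemma index_w: "w (Suc n) \<in> {1,2,3}"
  using indices_w by simp

lemma w_Suc_neq: "1 \<le> n \<Longrightarrow> w (Suc n) \<noteq> w n"
  using reduced by (simp add: reduced_inf_seq_def)

lemma markov_step:
  fixes n :: nat
  defines "k \<equiv> w (Suc n)"
  defines "y \<equiv> comp3 (other1 k) (markov n)" and "z \<equiv> comp3 (other2 k) (markov n)"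
  assumes ge1: "(1, 1, 1) \<le> markov n" and eq: "markov_eq l1 l2 l3 (markov n)"
    and last_max: "1 \<le> n \<Longrightarrow> \<forall>j\<in>{1,2,3}. comp3 j (markov n) \<le> comp3 (w n) (markov n)"
  shows "(1, 1, 1) \<le> markov (Suc n)" and "markov_eq l1 l2 l3 (markov (Suc n))"
    and "\<forall>j\<in>{1,2,3}. comp3 j (markov (Suc n)) \<le> comp3 k (markov (Suc n))"
    and "y + z \<le> comp3 k (markov (Suc n))" and "y * z \<le> comp3 k (markov (Suc n))"
    and "comp3 k (markov (Suc n)) \<le> (3 + real l1 + real l2 + real l3) * y * z"
proof -
  have k: "k \<in> {1,2,3}" using index_w by (simp add: k_def)
  note others = other_indices[OF k]
  have not_max: "comp3 k (markov n) \<le> y \<or> comp3 k (markov n) \<le> z"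
  proof (cases "n = 0")
    case True
    then show ?thesis by (simp add: y_def)
  next
    case False
    then have n: "1 \<le> n" by simp
    then have "w n \<in> {1,2,3}" "k \<noteq> w n" using indices_w w_Suc_neq by (auto simp: k_def)
    then have "w n = other1 k \<or> w n = other2 k" using index_eq_or_other[OF k] by blast
    moreover have "comp3 k (markov n) \<le> comp3 (w n) (markov n)" using last_max[OF n] k by blast
    ultimately show ?thesis unfolding y_def z_def by auto
  qed
  have Suc: "markov (Suc n) = gmut l1 l2 l3 k (markov n)" by (simp add: k_def)
  note step = gmut_step[OF k eq ge1 not_max[unfolded y_def z_def], folded Suc y_def z_def]
  have y1: "1 \<le> y" and z1: "1 \<le> z" using ge1 others unfolding y_def z_def triple_le_iff by auto
  have unchanged: "comp3 j (markov (Suc n)) = comp3 j (markov n)" if "j \<in> {1,2,3}" "j \<noteq> k" for j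
    unfolding Suc using comp3_gmut_other[OF k that] .
  show "markov_eq l1 l2 l3 (markov (Suc n))" "y + z \<le> comp3 k (markov (Suc n))"
    "y * z \<le> comp3 k (markov (Suc n))"
    "comp3 k (markov (Suc n)) \<le> (3 + real l1 + real l2 + real l3) * y * z"
    using step by simp_all
  show "(1, 1, 1) \<le> markov (Suc n)"
    using ge1 unchanged step(2) y1 z1 by (force simp: triple_le_iff)
  show "\<forall>j\<in>{1,2,3}. comp3 j (markov (Suc n)) \<le> comp3 k (markov (Suc n))"
  proof
    fix j :: nat assume j: "j \<in> {1,2,3}"
    show "comp3 j (markov (Suc n)) \<le> comp3 k (markov (Suc n))"
    proof (cases "j = k")
      case False
      then have "j = other1 k \<or> j = other2 k" using index_eq_or_other[OF k j] by blast
      then show ?thesis using unchanged[OF j False] step(2) y1 z1 unfolding y_def z_def by auto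
    qed simp
  qed
qed

lemma markov_invariant:
  "(1, 1, 1) \<le> markov n \<and> markov_eq l1 l2 l3 (markov n)
    \<and> (1 \<le> n \<longrightarrow> (\<forall>j\<in>{1,2,3}. comp3 j (markov n) \<le> comp3 (w n) (markov n)))"
proof (induction n)
  case 0
  show ?case by (simp add: markov_eq_def)
next
  case (Suc n)
  then show ?case using markov_step[of n] by simp
qed

lemma markov_ge1: "j \<in> {1,2,3} \<Longrightarrow> 1 \<le> comp3 j (markov n)"
  using triple_leD[OF conjunct1[OF markov_invariant[of n]]] by simp

lemma markov_bounds:
  fixes n :: nat
  defines "k \<equiv> w (Suc n)"
  defines "y \<equiv> comp3 (other1 k) (markov n)" and "z \<equiv> comp3 (other2 k) (markov n)"
  shows "y + z \<le> comp3 k (markov (Suc n))" and "y * z \<le> comp3 k (markov (Suc n))"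
    and "comp3 k (markov (Suc n)) \<le> (3 + real l1 + real l2 + real l3) * y * z"
  using markov_invariant[of n] markov_step[of n] unfolding k_def y_def z_def by simp_all

lemma markov_unchanged:
  "j \<in> {1,2,3} \<Longrightarrow> j \<noteq> w (Suc n) \<Longrightarrow> comp3 j (markov (Suc n)) = comp3 j (markov n)"
  using comp3_gmut_other[OF index_w] by simp

lemma markov_ge_emut: "emut (w (Suc n)) (markov n) \<le> markov (Suc n)"
  unfolding triple_le_iff
proof
  fix j :: nat assume j: "j \<in> {1,2,3}"
  show "comp3 j (emut (w (Suc n)) (markov n)) \<le> comp3 j (markov (Suc n))"
    using markov_bounds(1)[of n] markov_unchanged[OF j, of n] comp3_emut[OF index_w j]
    by (cases "j = w (Suc n)") simp_all
qed

text \<open>In logarithmic coordinates a mutation is a Euclid mutation up to an additive error in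
  \<open>[0, \<kappa>]\<close>; shifting all entries by \<open>\<kappa>\<close> absorbs the error.\<close>

lemma log_markov_emut_bounds:
  fixes n :: nat
  defines "P \<equiv> \<lambda>n. ln_triple (markov n)" and "\<kappa> \<equiv> ln (3 + real l1 + real l2 + real l3)"
  shows "emut (w (Suc n)) (P n) \<le> P (Suc n)"
    and "P (Suc n) + (\<kappa>, \<kappa>, \<kappa>) \<le> emut (w (Suc n)) (P n + (\<kappa>, \<kappa>, \<kappa>))"
proof -
  define k where "k = w (Suc n)"
  define y where "y = comp3 (other1 k) (markov n)"
  define z where "z = comp3 (other2 k) (markov n)"
  have k: "k \<in> {1,2,3}" using index_w by (simp add: k_def)
  note bounds = markov_bounds[of n, folded k_def, folded y_def z_def]
  have y: "0 < y" and z: "0 < z"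
    using markov_ge1 other_indices[OF k] unfolding y_def z_def
    by (meson less_le_trans zero_less_one)+
  have "ln (y * z) \<le> ln (comp3 k (markov (Suc n)))"
    using bounds(2) y z by (intro ln_mono) auto
  then have lower: "ln y + ln z \<le> ln (comp3 k (markov (Suc n)))"
    using y z by (simp add: ln_mult)
  have upper: "ln (comp3 k (markov (Suc n))) + \<kappa> \<le> (ln y + \<kappa>) + (ln z + \<kappa>)"
  proof -
    have "ln (comp3 k (markov (Suc n))) \<le> ln ((3 + real l1 + real l2 + real l3) * y * z)"
      using bounds(2,3) y z by (intro ln_mono) (auto intro: less_le_trans[OF mult_pos_pos])
    then have "ln (comp3 k (markov (Suc n))) \<le> \<kappa> + ln y + ln z"
      using y z unfolding \<kappa>_def by (simp add: ln_mult)
    moreover have "0 \<le> \<kappa>" unfolding \<kappa>_def by simp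
    ultimately show ?thesis by linarith
  qed
  show "emut (w (Suc n)) (P n) \<le> P (Suc n)"
    unfolding triple_le_iff k_def[symmetric]
  proof
    fix j :: nat assume j: "j \<in> {1,2,3}"
    show "comp3 j (emut k (P n)) \<le> comp3 j (P (Suc n))"
      using lower markov_unchanged[OF j, of n] comp3_emut[OF k j]
      by (cases "j = k") (simp_all add: P_def y_def z_def k_def)
  qed
  show "P (Suc n) + (\<kappa>, \<kappa>, \<kappa>) \<le> emut (w (Suc n)) (P n + (\<kappa>, \<kappa>, \<kappa>))"
    unfolding triple_le_iff k_def[symmetric]
  proof
    fix j :: nat assume j: "j \<in> {1,2,3}"
    show "comp3 j (P (Suc n) + (\<kappa>, \<kappa>, \<kappa>)) \<le> comp3 j (emut k (P n + (\<kappa>, \<kappa>, \<kappa>)))"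
      using upper markov_unchanged[OF j, of n] comp3_emut[OF k j]
      by (cases "j = k") (simp_all add: P_def y_def z_def k_def)
  qed
qed

subsection \<open>Every index recurs\<close>

lemma log_markov_between:
  fixes n0 d :: nat
  defines "P \<equiv> \<lambda>n. ln_triple (markov n)" and "\<kappa> \<equiv> ln (3 + real l1 + real l2 + real l3)"
    and "v \<equiv> \<lambda>i. w (n0 + i)"
  shows "chain emut v (P n0) d \<le> P (n0 + d)"
    and "P (n0 + d) \<le> chain emut v (P n0) d + \<kappa> *\<^sub>R chain emut v (1, 1, 1) d"
proof -
  show "chain emut v (P n0) d \<le> P (n0 + d)"
    using chain_emut_le_supersolution[of v "\<lambda>d. P (n0 + d)" d] log_markov_emut_bounds(1)
    by (simp add: P_def v_def)
  have "P (n0 + d) + (\<kappa>, \<kappa>, \<kappa>) \<le> chain emut v (P n0 + (\<kappa>, \<kappa>, \<kappa>)) d"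
    using chain_emut_ge_subsolution[of "\<lambda>d. P (n0 + d) + (\<kappa>, \<kappa>, \<kappa>)" v d]
      log_markov_emut_bounds(2)
    by (simp add: P_def \<kappa>_def v_def)
  also have "\<dots> = chain emut v (P n0) d + \<kappa> *\<^sub>R chain emut v (1, 1, 1) d"
    using chain_emut_scaleR[of v \<kappa> "(1, 1, 1)" d] by (simp add: chain_emut_add)
  finally have "P (n0 + d) + (\<kappa>, \<kappa>, \<kappa>) \<le> chain emut v (P n0) d + \<kappa> *\<^sub>R chain emut v (1, 1, 1) d" .
  moreover have "0 \<le> \<kappa>" by (simp add: \<kappa>_def)
  ultimately show "P (n0 + d) \<le> chain emut v (P n0) d + \<kappa> *\<^sub>R chain emut v (1, 1, 1) d"
    by (auto simp: triple_le_iff)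
qed

lemma log_markov_le_euclid:
  assumes abc: "0 < a" "0 < b" "0 < c" and j: "j \<in> {1,2,3}"
  shows "log_ratio (a, b, c) j n
    \<le> ln (3 + real l1 + real l2 + real l3) / min a (min b c)"
proof -
  define \<kappa> where "\<kappa> = ln (3 + real l1 + real l2 + real l3)"
  define B where "B = 1 / min a (min b c)"
  have \<kappa>: "0 \<le> \<kappa>" and B: "0 < B" using abc by (simp_all add: \<kappa>_def B_def)
  have E: "0 < comp3 j (chain emut w (a, b, c) n)"
    using positive_tripleD[OF chain_emut_positive[of "(a, b, c)" w n] j] abc by simp
  have "ln_triple (markov n) \<le> \<kappa> *\<^sub>R chain emut w (1, 1, 1) n"
  proof -
    have "ln_triple (markov 0) = 0" "chain emut w 0 n = 0"
      using chain_emut_scaleR[of w 0 _ n] by (simp_all add: ln_triple_def zero_prod_def)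
    then show ?thesis using log_markov_between(2)[of 0 n] by (simp add: \<kappa>_def)
  qed
  also have "\<dots> \<le> \<kappa> *\<^sub>R (B *\<^sub>R chain emut w (a, b, c) n)"
  proof -
    have "(1, 1, 1) \<le> B *\<^sub>R (a, b, c)" using abc by (auto simp: B_def field_simps)
    then have "chain emut w (1, 1, 1) n \<le> B *\<^sub>R chain emut w (a, b, c) n"
      using chain_emut_mono chain_emut_scaleR by metis
    then show ?thesis by (rule scaleR_triple_mono[OF \<kappa>])
  qed
  finally have "ln (comp3 j (markov n)) \<le> \<kappa> * B * comp3 j (chain emut w (a, b, c) n)"
    using j by (auto dest: triple_leD simp: mult.assoc)
  then show ?thesis unfolding \<kappa>_def B_def using E by (simp add: pos_divide_le_eq)
qed

lemma markov_unbounded: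
  assumes visits: "\<forall>j\<in>{1,2,3}. \<exists>\<^sub>\<infinity>n. w n = j"
  shows "\<forall>\<^sub>F n in sequentially. (B, B, B) \<le> markov n"
proof -
  have "\<forall>\<^sub>F n in sequentially. (B, B, B) \<le> chain emut w (1, 1, 1) n"
    using chain_emut_unbounded[OF indices_w visits, of "(1, 1, 1)"] by simp
  then show ?thesis
  proof eventually_elim
    case (elim n)
    also have "chain emut w (1, 1, 1) n \<le> markov n"
      using chain_emut_le_supersolution[of w markov n] markov_ge_emut by simp
    finally show ?case .
  qed
qed

lemma log_markov_sandwich:
  fixes n0 d :: nat
  assumes m: "0 < m" "(m, m, m) \<le> ln_triple (markov n0)"
  defines "v \<equiv> \<lambda>i. w (n0 + i)" and "\<kappa> \<equiv> ln (3 + real l1 + real l2 + real l3)"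
  shows "chain emut v (ln_triple (markov n0)) d \<le> ln_triple (markov (n0 + d))"
    and "ln_triple (markov (n0 + d)) \<le> (1 + \<kappa> / m) *\<^sub>R chain emut v (ln_triple (markov n0)) d"
proof -
  show "chain emut v (ln_triple (markov n0)) d \<le> ln_triple (markov (n0 + d))"
    using log_markov_between(1)[of n0 d] by (simp add: v_def)
  have "(1, 1, 1) \<le> (1 / m) *\<^sub>R ln_triple (markov n0)"
    using scaleR_triple_mono[of "1 / m", OF _ m(2)] m by simp
  then have "chain emut v (1, 1, 1) d \<le> (1 / m) *\<^sub>R chain emut v (ln_triple (markov n0)) d"
    using chain_emut_mono chain_emut_scaleR by metis
  from scaleR_triple_mono[OF _ this, of \<kappa>]
  have "\<kappa> *\<^sub>R chain emut v (1, 1, 1) d \<le> (\<kappa> / m) *\<^sub>R chain emut v (ln_triple (markov n0)) d"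
    by (simp add: \<kappa>_def)
  then show "ln_triple (markov (n0 + d)) \<le> (1 + \<kappa> / m) *\<^sub>R chain emut v (ln_triple (markov n0)) d"
    using log_markov_between(2)[of n0 d] unfolding v_def \<kappa>_def
    by (auto simp: triple_le_iff algebra_simps)
qed

text \<open>Restarted at a time \<open>n0\<close> where all log-entries exceed \<open>m\<close>, the log chain lies between the
  Euclid chain \<open>L\<close> started from it and \<open>(1 + \<kappa> / m) L\<close>; the ratios of \<open>L\<close> to the Euclid chain
  converge, and the global bound \<open>R\<close> on the ratios controls the relative error.\<close>

lemma log_markov_window:
  assumes visits: "\<forall>j\<in>{1,2,3}. \<exists>\<^sub>\<infinity>n. w n = j" and abc: "0 < a" "0 < b" "0 < c"
    and m: "0 < m" "(m, m, m) \<le> ln_triple (markov n0)" and \<delta>: "0 < \<delta>"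
    and bound: "\<And>n j. j \<in> {1,2,3} \<Longrightarrow> log_ratio (a, b, c) j n \<le> R"
  defines "\<kappa> \<equiv> ln (3 + real l1 + real l2 + real l3)"
  shows "\<exists>q. \<forall>\<^sub>F n in sequentially. \<forall>j\<in>{1,2,3}.
    q - \<delta> \<le> log_ratio (a, b, c) j n \<and> log_ratio (a, b, c) j n \<le> q + \<delta> + \<kappa> / m * R"
proof -
  define v where "v = (\<lambda>i. w (n0 + i))"
  define P where "P = (\<lambda>n. ln_triple (markov n))"
  define E where "E = chain emut w (a, b, c)"
  define L where "L = chain emut v (P n0)"
  have E_pos: "0 < comp3 j (E n)" if "j \<in> {1,2,3}" for j n
    using positive_tripleD[OF chain_emut_positive[of "(a, b, c)" w n] that] abc by (simp add: E_def)
  obtain q where "\<forall>j\<in>{1,2,3}. (\<lambda>d. comp3 j (L d) / comp3 j (E (n0 + d))) \<longlonglongrightarrow> q"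
    using chain_emut_restart_ratios_converge[OF indices_w visits, of "(a, b, c)" n0 "P n0"] abc
    unfolding L_def v_def E_def by auto
  then have "\<forall>j\<in>{1,2,3}. \<forall>\<^sub>F d in sequentially. \<bar>comp3 j (L d) / comp3 j (E (n0 + d)) - q\<bar> < \<delta>"
    using \<delta> by (auto simp: tendsto_iff dist_real_def)
  then have near: "\<forall>\<^sub>F d in sequentially.
      \<forall>j\<in>{1,2,3}. \<bar>comp3 j (L d) / comp3 j (E (n0 + d)) - q\<bar> < \<delta>"
    by (rule eventually_ball_finite[rotated]) simp
  define window where "window n \<longleftrightarrow> (\<forall>j\<in>{1,2,3}.
      q - \<delta> \<le> comp3 j (P n) / comp3 j (E n) \<and> comp3 j (P n) / comp3 j (E n) \<le> q + \<delta> + \<kappa> / m * R)"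
    for n
  have bound': "ln (comp3 j (markov n)) / comp3 j (E n) \<le> R" if "j \<in> {1,2,3}" for j n
    using bound[OF that] by (simp add: E_def)
  have s: "0 \<le> \<kappa> / m" using m by (simp add: \<kappa>_def)
  have "\<forall>\<^sub>F d in sequentially. window (d + n0)"
    using near
  proof eventually_elim
    case (elim d)
    show ?case
      unfolding window_def add.commute[of d]
    proof
      fix j :: nat assume j: "j \<in> {1,2,3}"
      have "comp3 j (L d) \<le> ln (comp3 j (markov (n0 + d)))"
        using triple_leD[OF log_markov_sandwich(1)[OF m] j] by (simp add: L_def v_def P_def)
      moreover have "ln (comp3 j (markov (n0 + d))) \<le> (1 + \<kappa> / m) * comp3 j (L d)"
        using triple_leD[OF log_markov_sandwich(2)[OF m] j] by (simp add: L_def v_def P_def \<kappa>_def)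
      ultimately show "q - \<delta> \<le> comp3 j (P (n0 + d)) / comp3 j (E (n0 + d)) \<and>
          comp3 j (P (n0 + d)) / comp3 j (E (n0 + d)) \<le> q + \<delta> + \<kappa> / m * R"
        using ratio_window_of_sandwich[OF E_pos[OF j] _ _ s bound'[OF j] bspec[OF elim j]]
        by (simp add: P_def)
    qed
  qed
  then have "\<forall>\<^sub>F n in sequentially. window n" by (rule eventually_sequentially_seg[THEN iffD1])
  then show ?thesis unfolding window_def P_def E_def by auto
qed

lemma log_markov_ratio_converges:
  assumes visits: "\<forall>j\<in>{1,2,3}. \<exists>\<^sub>\<infinity>n. w n = j" and abc: "0 < a" "0 < b" "0 < c"
  shows "\<exists>q. \<forall>j\<in>{1,2,3}. (\<lambda>n. log_ratio (a, b, c) j n) \<longlonglongrightarrow> q"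
proof (rule common_limit_of_shrinking_windows)
  show "1 \<in> {1,2,3::nat}" by simp
next
  fix \<epsilon> :: real assume \<epsilon>: "0 < \<epsilon>"
  define \<delta> where "\<delta> = \<epsilon> / 4"
  define \<kappa> where "\<kappa> = ln (3 + real l1 + real l2 + real l3)"
  define R where "R = \<kappa> / min a (min b c)"
  define m where "m = max 1 (\<kappa> * R / \<delta>)"
  have \<delta>: "0 < \<delta>" and m: "0 < m" using \<epsilon> by (simp_all add: \<delta>_def m_def)
  have "\<kappa> * R / \<delta> \<le> m" by (simp add: m_def)
  then have small: "\<kappa> / m * R \<le> \<delta>" using \<delta> m by (simp add: field_simps)
  obtain n0 where n0: "(exp m, exp m, exp m) \<le> markov n0"
    using markov_unbounded[OF visits, of "exp m"] by (auto simp: eventually_sequentially)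
  have "m \<le> comp3 j (ln_triple (markov n0))" if "j \<in> {1,2,3}" for j
    using ln_mono[OF triple_leD[OF n0 that]] by simp
  then have "(m, m, m) \<le> ln_triple (markov n0)" unfolding triple_le_iff comp3_const by blast
  then obtain q where window: "\<forall>\<^sub>F n in sequentially. \<forall>j\<in>{1,2,3}.
      q - \<delta> \<le> log_ratio (a, b, c) j n \<and> log_ratio (a, b, c) j n \<le> q + \<delta> + \<kappa> / m * R"
    using log_markov_window[OF visits abc m _ \<delta> log_markov_le_euclid[OF abc]]
    unfolding \<kappa>_def R_def by blast
  have shift: "q + \<delta> + \<kappa> / m * R \<le> q - \<delta> + \<epsilon>" using small \<epsilon> unfolding \<delta>_def by linarith
  have "\<forall>\<^sub>F n in sequentially. \<forall>j\<in>{1,2,3}.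
      q - \<delta> \<le> log_ratio (a, b, c) j n \<and> log_ratio (a, b, c) j n \<le> q - \<delta> + \<epsilon>"
    using window
  proof eventually_elim
    case (elim n)
    show ?case
    proof
      fix j :: nat assume j: "j \<in> {1,2,3}"
      show "q - \<delta> \<le> log_ratio (a, b, c) j n \<and> log_ratio (a, b, c) j n \<le> q - \<delta> + \<epsilon>"
        using bspec[OF elim j] shift by linarith
    qed
  qed
  then show "\<exists>\<alpha>. \<forall>\<^sub>F n in sequentially. \<forall>j\<in>{1,2,3}.
      \<alpha> \<le> log_ratio (a, b, c) j n \<and> log_ratio (a, b, c) j n \<le> \<alpha> + \<epsilon>" ..
qed

subsection \<open>Some index stops occurring\<close>

lemma eventually_avoids:
  assumes "finite {n. 1 \<le> n \<and> w n = i}"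
  obtains N where "1 \<le> N" and "\<And>n. N \<le> n \<Longrightarrow> w n \<noteq> i"
proof -
  obtain m where m: "\<forall>n\<in>{n. 1 \<le> n \<and> w n = i}. n \<le> m"
    using assms unfolding finite_nat_set_iff_bounded_le ..
  have "w n \<noteq> i" if "Suc m \<le> n" for n using m[rule_format, of n] \<open>Suc m \<le> n\<close> by auto
  then show ?thesis using that[of "Suc m"] by simp
qed

context
  fixes i N :: nat
  assumes i: "i \<in> {1,2,3}" and N: "1 \<le> N" and avoid: "\<And>n. N \<le> n \<Longrightarrow> w n \<noteq> i"
begin

lemma tail_index: "N \<le> n \<Longrightarrow> w n \<in> {1,2,3}"
  using indices_w N by simp

lemma tail_others:
  "N \<le> n \<Longrightarrow> other1 (w (Suc n)) = w n \<and> other2 (w (Suc n)) = i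
    \<or> other1 (w (Suc n)) = i \<and> other2 (w (Suc n)) = w n"
  using others_eq_of_distinct[OF tail_index tail_index i] w_Suc_neq[of n]
    avoid[of n] avoid[of "Suc n"] N
  by auto

lemma tail_period: "N \<le> n \<Longrightarrow> w (Suc (Suc n)) = w n"
  using tail_index[of n] tail_index[of "Suc n"] tail_index[of "Suc (Suc n)"] w_Suc_neq[of n]
    w_Suc_neq[of "Suc n"] avoid[of n] avoid[of "Suc n"] avoid[of "Suc (Suc n)"] i N
  by auto

lemma tail_frozen:
  "N \<le> n \<Longrightarrow> comp3 i (markov n) = comp3 i (markov N)
    \<and> comp3 i (chain emut w t n) = comp3 i (chain emut w t N)"
proof (induction n rule: dec_induct)
  case (step n)
  then have "i \<noteq> w (Suc n)" using avoid[of "Suc n"] by simp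
  then show ?case
    using step.IH markov_unchanged[OF i] chain_emut_unchanged[where w = w, OF index_w i] by simp
qed simp

lemma euclid_tail_step:
  assumes "N \<le> n"
  shows "comp3 (w (Suc n)) (chain emut w t (Suc n))
    = comp3 (w n) (chain emut w t n) + comp3 i (chain emut w t N)"
  using comp3_emut[OF index_w index_w, of n n "chain emut w t n"] tail_others[OF assms]
    tail_frozen[OF assms, of t]
  by auto

lemma markov_tail_grow:
  assumes "N \<le> n"
  shows "comp3 (w n) (markov n) + comp3 i (markov N) \<le> comp3 (w (Suc n)) (markov (Suc n))"
  using markov_bounds(1)[of n] tail_others[OF assms] tail_frozen[OF assms, of 0]
  by (auto simp: add.commute)

lemma markov_tail_recurrence:
  assumes n: "N \<le> n"
  defines "C \<equiv> comp3 i (markov N)"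
  shows "comp3 (w n) (markov (Suc (Suc n))) * comp3 (w n) (markov n)
    = (comp3 (w (Suc n)) (markov (Suc n)))\<^sup>2
    + mut_coeff l1 l2 l3 (w n) * C * comp3 (w (Suc n)) (markov (Suc n)) + C\<^sup>2"
proof -
  have period: "w (Suc (Suc n)) = w n" using tail_period[OF n] .
  have "w n \<noteq> w (Suc n)" using w_Suc_neq[of n] n N by simp
  then have x: "comp3 (w n) (markov (Suc n)) = comp3 (w n) (markov n)"
    using markov_unchanged[OF tail_index[OF n]] by simp
  have x_pos: "0 < comp3 (w n) (markov n)"
    using markov_ge1[OF tail_index[OF n], of n] by simp
  have "comp3 (w n) (markov (Suc (Suc n)))
      = ((comp3 (other1 (w n)) (markov (Suc n)))\<^sup>2
        + mut_coeff l1 l2 l3 (w n) * comp3 (other1 (w n)) (markov (Suc n))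
          * comp3 (other2 (w n)) (markov (Suc n))
        + (comp3 (other2 (w n)) (markov (Suc n)))\<^sup>2) / comp3 (w n) (markov (Suc n))"
    using comp3_gmut_self[OF index_w[of "Suc n"]] period by simp
  moreover have "comp3 i (markov (Suc n)) = C"
    using tail_frozen[of "Suc n" 0] n by (simp add: C_def)
  ultimately have "comp3 (w n) (markov (Suc (Suc n))) = ((comp3 (w (Suc n)) (markov (Suc n)))\<^sup>2
      + mut_coeff l1 l2 l3 (w n) * C * comp3 (w (Suc n)) (markov (Suc n)) + C\<^sup>2)
      / comp3 (w n) (markov n)"
    using tail_others[of "Suc n"] period x n by (auto simp: algebra_simps)
  then show ?thesis using x_pos by simp
qed

lemma log_markov_tail_ratio_converges:
  assumes abc: "0 < a" "0 < b" "0 < c"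
  shows "\<exists>q. (\<lambda>k. log_ratio (a, b, c) (w (N + k)) (N + k)) \<longlonglongrightarrow> q"
proof -
  define u where "u k = comp3 (w (N + k)) (markov (N + k))" for k
  define v where "v k = comp3 (w (N + k)) (chain emut w (a, b, c) (N + k))" for k
  define C where "C = comp3 i (markov N)"
  define Z where "Z = comp3 i (chain emut w (a, b, c) N)"
  have u1: "1 \<le> u k" for k using markov_ge1[OF tail_index] by (simp add: u_def)
  have C: "0 < C" using markov_ge1[OF i, of N] by (simp add: C_def)
  have Z: "0 < Z"
    using positive_tripleD[OF chain_emut_positive[of "(a, b, c)" w N] i] abc by (simp add: Z_def)
  have grow: "u k + C \<le> u (Suc k)" for k
    using markov_tail_grow[of "N + k"] by (simp add: u_def C_def)
  have rec: "u (Suc (Suc k)) * u k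
      = (u (Suc k))\<^sup>2 + mut_coeff l1 l2 l3 (w (N + k)) * C * u (Suc k) + C\<^sup>2" for k
    using markov_tail_recurrence[of "N + k"] tail_period[of "N + k"] by (simp add: u_def C_def)
  have coef: "0 \<le> mut_coeff l1 l2 l3 k" "mut_coeff l1 l2 l3 k \<le> real l1 + real l2 + real l3" for k
    by (simp_all add: mut_coeff_def)
  obtain T where T: "1 < T" "(\<lambda>k. u (Suc k) / u k) \<longlonglongrightarrow> T"
    using ratio_converges_of_markov_recurrence[where u = u and C = C
        and coef = "\<lambda>k. mut_coeff l1 l2 l3 (w (N + k))", OF C u1 grow coef rec] by blast
  have "(\<lambda>k. ln (u (Suc k)) - ln (u k)) \<longlonglongrightarrow> ln T"
  proof -
    have "(\<lambda>k. ln (u (Suc k) / u k)) \<longlonglongrightarrow> ln T" using tendsto_ln[OF T(2)] T(1) by simp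
    moreover have "ln (u (Suc k) / u k) = ln (u (Suc k)) - ln (u k)" for k
      using u1[of k] u1[of "Suc k"] by (simp add: ln_div)
    ultimately show ?thesis by simp
  qed
  moreover have "v (Suc k) = v k + Z" for k
    using euclid_tail_step[of "N + k"] by (simp add: v_def Z_def)
  ultimately have "(\<lambda>k. ln (u k) / v k) \<longlonglongrightarrow> ln T / Z"
    using stolz_cesaro_linear_denominator[where A = "\<lambda>k. ln (u k)" and V = v] Z by blast
  then show ?thesis unfolding u_def v_def by blast
qed

end

lemma log_markov_ratio_converges_on_two:
  assumes i: "i \<in> {1,2,3}" and fin: "finite {n. 1 \<le> n \<and> w n = i}"
    and abc: "0 < a" "0 < b" "0 < c"
  shows "\<exists>q. \<forall>j\<in>{1,2,3} - {i}. (\<lambda>n. log_ratio (a, b, c) j n) \<longlonglongrightarrow> q"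
proof -
  obtain N where N: "1 \<le> N" and avoid: "\<And>n. N \<le> n \<Longrightarrow> w n \<noteq> i"
    using eventually_avoids[OF fin] by blast
  obtain q where lim: "(\<lambda>k. log_ratio (a, b, c) (w (N + k)) (N + k)) \<longlonglongrightarrow> q"
    using log_markov_tail_ratio_converges[OF i N avoid abc] by blast
  have "(\<lambda>n. log_ratio (a, b, c) j n) \<longlonglongrightarrow> q" if j: "j \<in> {1,2,3} - {i}" for j
  proof -
    define h where "h n = (if w n = j then n - N else n - Suc N)" for n
    have "filterlim h sequentially sequentially"
      by (rule filterlim_at_top_mono[OF filterlim_minus_const_nat_at_top[of "Suc N"]])
        (auto simp: h_def intro!: always_eventually)
    note lim_h = filterlim_compose[OF lim this]
    have "\<forall>\<^sub>F n in sequentially.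
        log_ratio (a, b, c) (w (N + h n)) (N + h n) = log_ratio (a, b, c) j n"
      using eventually_ge_at_top[of "Suc N"]
    proof eventually_elim
      case (elim n)
      show ?case
      proof (cases "w n = j")
        case True
        then show ?thesis using elim by (simp add: h_def)
      next
        case False
        obtain m where n: "n = Suc m" and m: "N \<le> m" using elim by (cases n) auto
        have "w m = j"
          using tail_index[OF i N avoid m] tail_index[OF i N avoid, of n] avoid[OF m] avoid[of n]
            w_Suc_neq[of m] i j False n m N by auto
        moreover have "j \<in> {1,2,3}" "j \<noteq> w (Suc m)" using j False n by auto
        ultimately show ?thesis
          using markov_unchanged chain_emut_unchanged[where w = w, OF index_w] m
          by (simp add: h_def n)
      qed
    qed
    with lim_h show ?thesis by (rule Lim_transform_eventually)
  qed
  then show ?thesis by blast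
qed

end

theorem theorem6p10:
  fixes l1 l2 l3 :: nat and a b c :: real and w :: "nat \<Rightarrow> nat"
  assumes "zero_initial (a, b, c)"
    and "reduced_inf_seq w"
  shows "((\<forall>i\<in>{1,2,3}. \<exists>\<^sub>\<infinity>n. w n = i) \<longrightarrow>
           (\<exists>q::real. \<forall>j\<in>{1,2,3}.
              ((\<lambda>n. ln (comp3 j (chain (gmut l1 l2 l3) w (1,1,1) n)) / comp3 j (chain emut w (a,b,c) n))
                 \<longlongrightarrow> q) sequentially))
       \<and> (\<forall>i\<in>{1,2,3}. finite {n. n \<ge> 1 \<and> w n = i} \<longrightarrow>
           (\<exists>q::real. \<forall>j\<in>{1,2,3} - {i}.
              ((\<lambda>n. ln (comp3 j (chain (gmut l1 l2 l3) w (1,1,1) n)) / comp3 j (chain emut w (a,b,c) n))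
                 \<longlongrightarrow> q) sequentially))"
proof -
  have abc: "0 < a" "0 < b" "0 < c" using assms(1) by (auto simp: zero_initial_def)
  show ?thesis
    using log_markov_ratio_converges[OF assms(2) _ abc]
      log_markov_ratio_converges_on_two[OF assms(2) _ _ abc]
    by blast
qed

end
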